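(* Let $n=2^k$ for some $k\in\mathbb{N}$. Then the path graph on $n$ nodes is reachable (observable) from any single node $i\in\{1,\dots,n\}$, i.e. the pair $(L_n,e_i)$ is reachable (and $(L_n,e_i^T)$ is observable) for every $i$.
   Context: The path graph on nodes $\{1,\dots,n\}$ has edges $\{i,i+1\}$; its Laplacian $L_n$ is tridiagonal with diagonal $(1,2,\dots,2,1)$ and off-diagonal entries $-1$. Reachability of $(L_n,e_i)$ means $[e_i|L_ne_i|\cdots|L_n^{n-1}e_i]$ has rank $n$. *)

theory Defs
  imports "Jordan_Normal_Form.DL_Rank"
begin

(* Laplacian of the path graph on nodes 0..n-1 (0-based; node i of the paper is index i-1).
   Diagonal = degree (1,2,...,2,1), off-diagonal -1 for adjacent nodes. *)
definition path_laplacian :: "nat \<Rightarrow> real mat" where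
  "path_laplacian n = mat n n (\<lambda>(i,j).
     if i = j then (if 0 < i then 1 else 0) + (if i + 1 < n then 1 else 0)
     else if i + 1 = j \<or> j + 1 = i then -1 else 0)"

definition reach_mat :: "real mat \<Rightarrow> real vec \<Rightarrow> real mat" where
  "reach_mat A b = mat (dim_row A) (dim_row A) (\<lambda>(r,c). ((A ^\<^sub>m c) *\<^sub>v b) $ r)"

definition reachable :: "real mat \<Rightarrow> real vec \<Rightarrow> bool" where
  "reachable A b \<longleftrightarrow> vec_space.rank (dim_row A) (reach_mat A b) = dim_row A"

definition obs_mat :: "real mat \<Rightarrow> real vec \<Rightarrow> real mat" where
  "obs_mat A c = mat (dim_row A) (dim_row A) (\<lambda>(r,j). (mat_of_row c * A ^\<^sub>m r) $$ (0, j))"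

definition observable :: "real mat \<Rightarrow> real vec \<Rightarrow> bool" where
  "observable A c \<longleftrightarrow> vec_space.rank (dim_row A) (obs_mat A c) = dim_row A"

end

theory Submission
  imports Defs "HOL-Computational_Algebra.Polynomial"
begin

text \<open>The rows of the DCT-II matrix, \<open>V $$ (j,m) = cos (j \<pi> (m + 1/2) / n)\<close>, are left
  eigenvectors of the path Laplacian for the pairwise distinct eigenvalues \<open>2 - 2 cos (j \<pi> / n)\<close>.
  Hence \<open>V\<close> times the reachability matrix of \<open>e\<^sub>i\<close> is a Vandermonde matrix in these eigenvalues
  with row \<open>j\<close> scaled by \<open>V $$ (j,i)\<close>, and it is nonsingular as soon as column \<open>i\<close> of \<open>V\<close> has
  no zero entry. For \<open>n = 2^k\<close> a zero entry would mean \<open>j (2m + 1) = q n\<close> with \<open>q\<close> odd, which is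
  impossible for \<open>0 \<le> j < n\<close>. Observability follows because the Laplacian is symmetric, which makes
  the observability matrix the transpose of the reachability matrix.\<close>

lemma pow_mat_commute:
  assumes A: "(A :: 'a :: semiring_1 mat) \<in> carrier_mat n n"
  shows "A ^\<^sub>m r * A = A * A ^\<^sub>m r"
proof (induction r)
  case (Suc r)
  have "A ^\<^sub>m Suc r * A = (A * A ^\<^sub>m r) * A" using Suc by simp
  also have "\<dots> = A * A ^\<^sub>m Suc r" using assoc_mult_mat[OF A pow_carrier_mat[OF A] A] by simp
  finally show ?case .
qed (use A in simp)

lemma transpose_pow_mat:
  assumes A: "(A :: 'a :: comm_semiring_1 mat) \<in> carrier_mat n n"
    and sym: "transpose_mat A = A"
  shows "transpose_mat (A ^\<^sub>m r) = A ^\<^sub>m r"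
proof (induction r)
  case (Suc r)
  have "transpose_mat (A ^\<^sub>m Suc r) = A * A ^\<^sub>m r"
    using transpose_mult[OF pow_carrier_mat[OF A] A] Suc sym by simp
  then show ?case using pow_mat_commute[OF A] by simp
qed (use A in simp)

lemma obs_mat_eq_transpose_reach_mat:
  assumes A: "A \<in> carrier_mat n n" and sym: "transpose_mat A = A" and b: "b \<in> carrier_vec n"
  shows "obs_mat A b = transpose_mat (reach_mat A b)"
proof (rule eq_matI)
  fix r j assume "r < dim_row (transpose_mat (reach_mat A b))"
    and "j < dim_col (transpose_mat (reach_mat A b))"
  then have rj: "r < n" "j < n" using A by (auto simp: reach_mat_def)
  let ?P = "A ^\<^sub>m r"
  have P: "?P \<in> carrier_mat n n" using A by simp
  have "obs_mat A b $$ (r,j) = row (mat_of_row b) 0 \<bullet> col ?P j"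
    using rj A b by (simp add: obs_mat_def mat_of_row_def)
  also have "\<dots> = b \<bullet> row (transpose_mat ?P) j"
    using rj A by simp
  also have "\<dots> = (?P *\<^sub>v b) $ j"
    using transpose_pow_mat[OF A sym, of r] comm_scalar_prod[OF b row_carrier_vec] A P rj by simp
  finally show "obs_mat A b $$ (r,j) = transpose_mat (reach_mat A b) $$ (r,j)"
    using rj A by (simp add: reach_mat_def)
qed (use A in \<open>auto simp: obs_mat_def reach_mat_def\<close>)

lemma reachable_iff_det:
  assumes "A \<in> carrier_mat n n"
  shows "reachable A b \<longleftrightarrow> det (reach_mat A b) \<noteq> 0"
  using assms vec_space.det_rank_iff[of "reach_mat A b" n]
  by (simp add: reachable_def reach_mat_def)

lemma observable_iff_det:
  assumes "A \<in> carrier_mat n n"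
  shows "observable A c \<longleftrightarrow> det (obs_mat A c) \<noteq> 0"
  using assms vec_space.det_rank_iff[of "obs_mat A c" n]
  by (simp add: observable_def obs_mat_def)

lemma vandermonde_kernel_trivial:
  fixes l x :: "nat \<Rightarrow> 'a :: idom"
  assumes inj: "inj_on l {..<n}" and zero: "\<And>j. j < n \<Longrightarrow> (\<Sum>r<n. x r * l j ^ r) = 0"
    and r: "r < n"
  shows "x r = 0"
proof -
  define p where "p = (\<Sum>r<n. monom (x r) r)"
  have poly_p: "poly p y = (\<Sum>r<n. x r * y ^ r)" for y
    unfolding p_def by (simp add: poly_sum poly_monom)
  have "degree p < n"
    unfolding p_def using r by (intro degree_sum_less) (auto intro: le_less_trans[OF degree_monom_le])
  have "p = 0"
  proof (rule ccontr)
    assume "p \<noteq> 0"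
    have "n = card (l ` {..<n})" using card_image[OF inj] by simp
    also have "\<dots> \<le> card {y. poly p y = 0}"
      using zero poly_p by (intro card_mono poly_roots_finite[OF \<open>p \<noteq> 0\<close>]) auto
    also have "\<dots> \<le> degree p" by (rule card_poly_roots_bound[OF \<open>p \<noteq> 0\<close>])
    finally show False using \<open>degree p < n\<close> by simp
  qed
  moreover have "coeff p r = x r"
    unfolding p_def using r by (simp add: coeff_sum coeff_monom)
  ultimately show ?thesis by simp
qed

lemma mult_pow_mat_left_eigen:
  fixes V A :: "'a :: comm_semiring_1 mat"
  assumes V: "V \<in> carrier_mat n n" and A: "A \<in> carrier_mat n n"
    and eigen: "\<And>j c. j < n \<Longrightarrow> c < n \<Longrightarrow> (V * A) $$ (j,c) = l j * V $$ (j,c)"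
    and jc: "j < n" "c < n"
  shows "(V * A ^\<^sub>m r) $$ (j,c) = l j ^ r * V $$ (j,c)"
  using jc(2)
proof (induction r arbitrary: c)
  case 0
  then show ?case using V A jc(1) by simp
next
  case (Suc r)
  have "(V * A ^\<^sub>m Suc r) $$ (j,c) = ((V * A ^\<^sub>m r) * A) $$ (j,c)"
    using assoc_mult_mat[OF V pow_carrier_mat[OF A] A] by simp
  also have "\<dots> = (\<Sum>m<n. (V * A ^\<^sub>m r) $$ (j,m) * A $$ (m,c))"
    using V A jc(1) Suc.prems by (simp add: scalar_prod_def lessThan_atLeast0)
  also have "\<dots> = l j ^ r * (\<Sum>m<n. V $$ (j,m) * A $$ (m,c))"
    using Suc.IH by (simp add: sum_distrib_left mult_ac)
  also have "\<dots> = l j ^ r * (l j * V $$ (j,c))"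
    using eigen[OF jc(1) Suc.prems] V A jc(1) Suc.prems
    by (simp add: scalar_prod_def lessThan_atLeast0)
  also have "\<dots> = l j ^ Suc r * V $$ (j,c)"
    by (simp add: algebra_simps)
  finally show ?case .
qed

lemma det_reach_mat_nonzero:
  fixes A V :: "real mat" and l :: "nat \<Rightarrow> real"
  assumes A: "A \<in> carrier_mat n n" and V: "V \<in> carrier_mat n n" and b: "b \<in> carrier_vec n"
    and eigen: "\<And>j c. j < n \<Longrightarrow> c < n \<Longrightarrow> (V * A) $$ (j,c) = l j * V $$ (j,c)"
    and inj: "inj_on l {..<n}"
    and nonzero: "\<And>j. j < n \<Longrightarrow> (V *\<^sub>v b) $ j \<noteq> 0"
  shows "det (reach_mat A b) \<noteq> 0"
proof
  let ?K = "reach_mat A b"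
  have K: "?K \<in> carrier_mat n n" using A by (simp add: reach_mat_def)
  assume "det ?K = 0"
  then obtain x where x: "x \<in> carrier_vec n" "x \<noteq> 0\<^sub>v n" "?K *\<^sub>v x = 0\<^sub>v n"
    using det_0_iff_vec_prod_zero_field[OF K] by blast
  have VK: "(V * ?K) $$ (j,r) = l j ^ r * (V *\<^sub>v b) $ j" if "j < n" "r < n" for j r
  proof -
    have "col ?K r = A ^\<^sub>m r *\<^sub>v b"
      using that A by (intro eq_vecI) (auto simp: reach_mat_def)
    then have "(V * ?K) $$ (j,r) = (V *\<^sub>v (A ^\<^sub>m r *\<^sub>v b)) $ j"
      using that V K by simp
    also have "\<dots> = ((V * A ^\<^sub>m r) *\<^sub>v b) $ j"
      using assoc_mult_mat_vec[OF V pow_carrier_mat[OF A] b] by simp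
    also have "\<dots> = (\<Sum>c<n. l j ^ r * (V $$ (j,c) * b $ c))"
      using that V A b mult_pow_mat_left_eigen[OF V A eigen \<open>j < n\<close>]
      by (simp add: scalar_prod_def lessThan_atLeast0 mult.assoc)
    also have "\<dots> = l j ^ r * (V *\<^sub>v b) $ j"
      using that V b by (simp add: scalar_prod_def lessThan_atLeast0 sum_distrib_left)
    finally show ?thesis .
  qed
  have "(\<Sum>r<n. x $ r * l j ^ r) = 0" if j: "j < n" for j
  proof -
    have "0 = ((V * ?K) *\<^sub>v x) $ j" using x j V K by simp
    also have "\<dots> = (\<Sum>r<n. (V * ?K) $$ (j,r) * x $ r)"
      using j x(1) V K
      by (simp del: assoc_mult_mat_vec add: scalar_prod_def lessThan_atLeast0 row_def)
    also have "\<dots> = (\<Sum>r<n. x $ r * l j ^ r * (V *\<^sub>v b) $ j)"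
      by (rule sum.cong[OF refl]) (simp add: VK[OF j] mult.commute mult.left_commute)
    also have "\<dots> = (\<Sum>r<n. x $ r * l j ^ r) * (V *\<^sub>v b) $ j"
      by (simp add: sum_distrib_right)
    finally show ?thesis using nonzero[OF j] by simp
  qed
  then have "x $ r = 0" if "r < n" for r
    using vandermonde_kernel_trivial[OF inj, of "\<lambda>r. x $ r"] that by blast
  then have "x = 0\<^sub>v n"
    using x(1) by (intro eq_vecI) auto
  then show False using x(2) by simp
qed

lemma path_laplacian_carrier: "path_laplacian n \<in> carrier_mat n n"
  by (simp add: path_laplacian_def)

lemma transpose_path_laplacian: "transpose_mat (path_laplacian n) = path_laplacian n"
  by (rule eq_matI) (auto simp: path_laplacian_def)

lemma sum_mult_path_laplacian_col:
  fixes g :: "nat \<Rightarrow> real"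
  assumes "c < n"
  shows "(\<Sum>m<n. g m * path_laplacian n $$ (m,c)) =
    (if 0 < c then g c - g (c - 1) else 0) + (if c + 1 < n then g c - g (c + 1) else 0)"
proof -
  have "(\<Sum>m<n. g m * path_laplacian n $$ (m,c)) = (\<Sum>m<n.
      (if m = c then (if 0 < c then g c else 0) + (if c + 1 < n then g c else 0) else 0)
    + (if m = c - 1 then (if 0 < c then - g (c - 1) else 0) else 0)
    + (if m = c + 1 then (if c + 1 < n then - g (c + 1) else 0) else 0))"
    using assms by (intro sum.cong refl) (auto simp: path_laplacian_def)
  also have "\<dots> = (if 0 < c then g c - g (c - 1) else 0) + (if c + 1 < n then g c - g (c + 1) else 0)"
    using assms by (simp add: sum.distrib)
  finally show ?thesis .
qed

definition dct_mat :: "nat \<Rightarrow> real mat" where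
  "dct_mat n = mat n n (\<lambda>(j,m). cos (real j * pi / real n * (real m + 1/2)))"

definition path_laplacian_eigval :: "nat \<Rightarrow> nat \<Rightarrow> real" where
  "path_laplacian_eigval n j = 2 - 2 * cos (real j * pi / real n)"

lemma dct_mat_carrier: "dct_mat n \<in> carrier_mat n n"
  by (simp add: dct_mat_def)

lemma dct_mat_mult_path_laplacian:
  assumes j: "j < n" and c: "c < n"
  shows "(dct_mat n * path_laplacian n) $$ (j,c) = path_laplacian_eigval n j * dct_mat n $$ (j,c)"
proof -
  define t where "t = real j * pi / real n"
  define g where "g m = cos (t * (real m + 1/2))" for m :: nat
  define y where "y = t * (real c + 1/2)"
  have below: "g (c - 1) = cos (y - t)" if "0 < c"
    using that by (simp add: g_def y_def of_nat_diff algebra_simps)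
  have above: "g (c + 1) = cos (y + t)"
    by (simp add: g_def y_def algebra_simps)
  text \<open>The two boundary nodes behave as if reflected ghost nodes \<open>-1\<close> and \<open>n\<close> were present.\<close>
  have left_ghost: "cos (y - t) = cos y" if "c = 0"
    using that cos_minus[of y] by (simp add: y_def)
  have right_ghost: "cos (y + t) = cos y" if "c + 1 = n"
  proof -
    have "t * real n = real j * pi" using j by (simp add: t_def)
    then have "y + t = real j * pi + t / 2" "y = real j * pi - t / 2"
      by (simp_all add: y_def algebra_simps flip: that)
    moreover have "sin (real j * pi) = 0" by (simp add: sin_zero_iff_int2)
    ultimately show ?thesis by (simp add: cos_add cos_diff)
  qed
  have "g c = cos y" by (simp add: g_def y_def)
  moreover have "cos (y - t) + cos (y + t) = 2 * cos t * cos y" by (simp add: cos_add cos_diff)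
  ultimately have combine: "(if 0 < c then g c - g (c - 1) else 0) + (if c + 1 < n then g c - g (c + 1) else 0)
      = (2 - 2 * cos t) * g c"
    using below above left_ghost right_ghost c
    by (cases "c = 0"; cases "c + 1 < n") (auto simp: algebra_simps)
  have "(dct_mat n * path_laplacian n) $$ (j,c) = (\<Sum>m<n. g m * path_laplacian n $$ (m,c))"
    using j c path_laplacian_carrier[of n]
    by (simp add: dct_mat_def g_def t_def scalar_prod_def lessThan_atLeast0)
  also have "\<dots> = (2 - 2 * cos t) * g c"
    unfolding sum_mult_path_laplacian_col[OF c] combine ..
  also have "\<dots> = path_laplacian_eigval n j * dct_mat n $$ (j,c)"
    using j c by (simp add: dct_mat_def path_laplacian_eigval_def g_def t_def)
  finally show ?thesis .
qed

lemma inj_on_path_laplacian_eigval: "inj_on (path_laplacian_eigval n) {..<n}"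
proof (rule inj_onI)
  fix a b assume "a \<in> {..<n}" "b \<in> {..<n}"
    and eq: "path_laplacian_eigval n a = path_laplacian_eigval n b"
  then have a: "a < n" and b: "b < n" by auto
  have angle: "0 \<le> real x * pi / real n" "real x * pi / real n \<le> pi" if "x < n" for x
    using that by (auto simp: field_simps)
  have "cos (real a * pi / real n) = cos (real b * pi / real n)"
    using eq by (simp add: path_laplacian_eigval_def)
  then have "real a * pi / real n = real b * pi / real n"
    by (rule cos_inj_pi[OF angle[OF a] angle[OF b]])
  then show "a = b" using a by (simp add: field_simps)
qed

lemma dct_mat_nonzero:
  assumes n: "n = 2 ^ k" and j: "j < n" and m: "m < n"
  shows "dct_mat n $$ (j,m) \<noteq> 0"
proof
  assume "dct_mat n $$ (j,m) = 0"
  then have "cos (real j * pi / real n * (real m + 1/2)) = 0" using j m by (simp add: dct_mat_def)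
  then obtain q :: int where "odd q" and q: "real j * pi / real n * (real m + 1/2) = of_int q * (pi/2)"
    using cos_zero_iff_int by blast
  from q have "pi * (real j * (2 * real m + 1)) = pi * (of_int q * real n)"
    using j by (simp add: field_simps)
  then have "real_of_int (int j * (2 * int m + 1)) = real_of_int (q * 2 ^ k)"
    using n by simp
  then have eq: "int j * (2 * int m + 1) = q * 2 ^ k"
    by (simp only: of_int_eq_iff)
  then have "(2::int) ^ k dvd int j * (2 * int m + 1)" by simp
  moreover have "coprime ((2::int) ^ k) (2 * int m + 1)" by simp
  ultimately have "(2::int) ^ k dvd int j" by (simp add: coprime_dvd_mult_left_iff)
  then have "n dvd j" using n by (metis of_nat_dvd_iff of_nat_numeral of_nat_power)
  then have "j = 0" using j by (metis nat_dvd_not_less neq0_conv)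
  then show False using eq \<open>odd q\<close> by simp
qed

theorem mainTheorem9:
  fixes k n i :: nat
  assumes "n = 2 ^ k" and "i \<in> {1..n}"
  shows "reachable (path_laplacian n) (unit_vec n (i - 1)) \<and>
         observable (path_laplacian n) (unit_vec n (i - 1))"
proof -
  let ?L = "path_laplacian n" and ?b = "unit_vec n (i - 1) :: real vec"
  have i: "i - 1 < n" using assms(2) by auto
  have "(dct_mat n *\<^sub>v ?b) $ j \<noteq> 0" if "j < n" for j
    using dct_mat_nonzero[OF assms(1) that i] that i dct_mat_carrier[of n] by simp
  then have "det (reach_mat ?L ?b) \<noteq> 0"
    using det_reach_mat_nonzero[OF path_laplacian_carrier dct_mat_carrier unit_vec_carrier
        dct_mat_mult_path_laplacian inj_on_path_laplacian_eigval] by blast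
  moreover have "det (obs_mat ?L ?b) = det (reach_mat ?L ?b)"
    using obs_mat_eq_transpose_reach_mat[OF path_laplacian_carrier transpose_path_laplacian]
      det_transpose[of "reach_mat ?L ?b" n] path_laplacian_carrier[of n]
    by (simp add: reach_mat_def)
  ultimately show ?thesis
    using reachable_iff_det observable_iff_det path_laplacian_carrier by metis
qed

end
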